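(* Let $d>1$ and $\gamma>0$, and let $K(x,y)=e^{-\gamma\|x-y\|_2^2}$ be the Gaussian kernel on $\mathbb{R}^d$. There exists a finite dataset $X\subset\mathbb{R}^d$ such that for every $D\in\mathbb{N}$ and every map $\phi=(\phi_1,\dots,\phi_D):X\to\mathbb{R}^D$ satisfying $\langle\phi(x),\phi(y)\rangle=\sum_{j=1}^D\phi_j(x)\phi_j(y)=K(x,y)$ for all $x,y\in X$, there exists some $j\in[D]$ such that $\phi_j$ depends on more than one input coordinate, i.e. there is no $i\in[d]$ and no function $h:\mathbb{R}\to\mathbb{R}$ with $\phi_j(x)=h(x_i)$ for all $x\in X$.
   Context: For $x\in\mathbb{R}^d$, $x_i$ denotes its $i$-th coordinate; $[D]=\{1,\dots,D\}$. A feature map $\phi:X\to\mathbb{R}^D$ is called interpretable if each component $\phi_j$ depends on exactly one coordinate of $x$; the theorem says no feature map of the Gaussian kernel on this $X$ is interpretable. *)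

theory Defs
  imports "HOL-Analysis.Analysis"
begin

definition gauss_kernel :: "real \<Rightarrow> real ^ 'd \<Rightarrow> real ^ 'd \<Rightarrow> real" where
  "gauss_kernel \<gamma> x y = exp (- \<gamma> * (norm (x - y))\<^sup>2)"

end

theory Submission
  imports Defs
begin

text \<open>A function of a single coordinate has vanishing mixed second difference on every
axis-parallel rectangle spanned by two different coordinate directions, and by bilinearity so does
\<open>K(x\<^sub>0, \<cdot>)\<close> for any kernel realised by such features. For the Gaussian kernel on the unit
square, however, the mixed difference \<open>1 - 2 e\<^sup>-\<^sup>\<gamma> + e\<^sup>-\<^sup>2\<^sup>\<gamma> = (1 - e\<^sup>-\<^sup>\<gamma>)\<^sup>2\<close> is positive.\<close>

lemma single_coordinate_mixed_difference:
  fixes x :: "real ^ 'n" and h :: "real \<Rightarrow> 'a::ab_semigroup_add"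
  assumes "a \<noteq> b"
  shows "h (x $ i) + h ((x + axis a s + axis b t) $ i) = h ((x + axis a s) $ i) + h ((x + axis b t) $ i)"
  using assms by (cases "i = a"; cases "i = b") (auto simp: axis_def add.commute)

lemma sum_products_mixed_difference:
  fixes \<phi> :: "'a \<Rightarrow> nat \<Rightarrow> real"
  assumes "\<And>j. j < D \<Longrightarrow> \<phi> p j + \<phi> q j = \<phi> r j + \<phi> s j"
  shows "(\<Sum>j<D. \<phi> y j * \<phi> p j) + (\<Sum>j<D. \<phi> y j * \<phi> q j)
       = (\<Sum>j<D. \<phi> y j * \<phi> r j) + (\<Sum>j<D. \<phi> y j * \<phi> s j)"
proof -
  have "(\<Sum>j<D. \<phi> y j * \<phi> p j) + (\<Sum>j<D. \<phi> y j * \<phi> q j) = (\<Sum>j<D. \<phi> y j * (\<phi> p j + \<phi> q j))"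
    by (simp add: sum.distrib distrib_left)
  also have "\<dots> = (\<Sum>j<D. \<phi> y j * (\<phi> r j + \<phi> s j))"
    using assms by (intro sum.cong) auto
  also have "\<dots> = (\<Sum>j<D. \<phi> y j * \<phi> r j) + (\<Sum>j<D. \<phi> y j * \<phi> s j)"
    by (simp add: sum.distrib distrib_left)
  finally show ?thesis .
qed

lemma gauss_kernel_add_right:
  "gauss_kernel \<gamma> x (x + v) = exp (- \<gamma> * (norm v)\<^sup>2)"
  by (simp add: gauss_kernel_def)

lemma norm_axis_squared: "(norm (axis a s :: real ^ 'n))\<^sup>2 = s\<^sup>2"
  unfolding power2_norm_eq_inner by (simp add: inner_axis_axis power2_eq_square)

lemma norm_axis_add_axis_squared:
  assumes "a \<noteq> b"
  shows "(norm (axis a s + axis b t :: real ^ 'n))\<^sup>2 = s\<^sup>2 + t\<^sup>2"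
  unfolding power2_norm_eq_inner
  using assms by (simp add: inner_add_left inner_add_right inner_axis_axis power2_eq_square)

lemma gauss_kernel_mixed_difference_pos:
  fixes x :: "real ^ 'n"
  assumes "a \<noteq> b" and "\<gamma> > 0" and "s \<noteq> 0" and "t \<noteq> 0"
  shows "gauss_kernel \<gamma> x (x + axis a s) + gauss_kernel \<gamma> x (x + axis b t)
       < gauss_kernel \<gamma> x x + gauss_kernel \<gamma> x (x + axis a s + axis b t)"
proof -
  define p where "p = exp (- \<gamma> * s\<^sup>2)"
  define q where "q = exp (- \<gamma> * t\<^sup>2)"
  have "p < 1" "q < 1"
    using assms by (simp_all add: p_def q_def mult_pos_pos)
  then have "p + q < 1 + p * q"
    using mult_pos_pos[of "1 - p" "1 - q"] by (simp add: algebra_simps)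
  moreover have "gauss_kernel \<gamma> x (x + axis a s + axis b t) = p * q"
    using gauss_kernel_add_right[of \<gamma> x "axis a s + axis b t"] norm_axis_add_axis_squared[OF assms(1)]
    by (simp add: add.assoc p_def q_def distrib_left exp_add[symmetric])
  moreover have "gauss_kernel \<gamma> x x = 1"
    by (simp add: gauss_kernel_def)
  ultimately show ?thesis
    by (simp add: gauss_kernel_add_right norm_axis_squared p_def q_def)
qed

lemma single_coordinate_features_kernel_mixed_difference:
  fixes x :: "real ^ 'n" and \<phi> :: "real ^ 'n \<Rightarrow> nat \<Rightarrow> real"
  assumes "a \<noteq> b"
    and square: "x \<in> X" "x + axis a s \<in> X" "x + axis b t \<in> X" "x + axis a s + axis b t \<in> X"
    and K: "\<forall>y\<in>X. \<forall>z\<in>X. (\<Sum>j<D. \<phi> y j * \<phi> z j) = k y z"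
    and features: "\<forall>j<D. \<exists>i h. \<forall>y\<in>X. \<phi> y j = h (y $ i)"
  shows "k x x + k x (x + axis a s + axis b t) = k x (x + axis a s) + k x (x + axis b t)"
proof -
  have mixed: "\<phi> x j + \<phi> (x + axis a s + axis b t) j = \<phi> (x + axis a s) j + \<phi> (x + axis b t) j"
    if "j < D" for j
  proof -
    obtain i h where "\<forall>y\<in>X. \<phi> y j = h (y $ i)"
      using \<open>j < D\<close> features by blast
    then show ?thesis
      using single_coordinate_mixed_difference[OF \<open>a \<noteq> b\<close>, of h x i s t] square by simp
  qed
  show ?thesis
    using sum_products_mixed_difference[where D = D and \<phi> = \<phi> and y = x, OF mixed]
    unfolding square[THEN K[rule_format, OF square(1)]] .
qed

theorem theorem1:
  fixes \<gamma> :: real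
  assumes "CARD('d) > 1" and "\<gamma> > 0"
  shows "\<exists>X :: (real ^ 'd) set. finite X \<and>
    (\<forall>(D::nat) (\<phi> :: real ^ 'd \<Rightarrow> nat \<Rightarrow> real).
       (\<forall>x\<in>X. \<forall>y\<in>X. (\<Sum>j<D. \<phi> x j * \<phi> y j) = gauss_kernel \<gamma> x y) \<longrightarrow>
       (\<exists>j<D. \<not> (\<exists>(i::'d) (h::real \<Rightarrow> real). \<forall>x\<in>X. \<phi> x j = h (x $ i))))"
proof -
  obtain a b :: 'd where "a \<noteq> b"
    using assms(1) card_le_Suc0_iff_eq[of "UNIV :: 'd set"] by auto
  fix x :: "real ^ 'd"
  define X where "X = {x, x + axis a 1, x + axis b 1, x + axis a 1 + axis b 1}"
  have "\<exists>j<D. \<not> (\<exists>i h. \<forall>y\<in>X. \<phi> y j = h (y $ i))"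
    if "\<forall>y\<in>X. \<forall>z\<in>X. (\<Sum>j<D. \<phi> y j * \<phi> z j) = gauss_kernel \<gamma> y z"
    for D :: nat and \<phi> :: "real ^ 'd \<Rightarrow> nat \<Rightarrow> real"
  proof (rule ccontr)
    assume "\<not> ?thesis"
    then have "\<forall>j<D. \<exists>i h. \<forall>y\<in>X. \<phi> y j = h (y $ i)" by blast
    then have "gauss_kernel \<gamma> x x + gauss_kernel \<gamma> x (x + axis a 1 + axis b 1)
             = gauss_kernel \<gamma> x (x + axis a 1) + gauss_kernel \<gamma> x (x + axis b 1)"
      by (intro single_coordinate_features_kernel_mixed_difference[OF \<open>a \<noteq> b\<close> _ _ _ _ that])
        (simp_all add: X_def)
    with gauss_kernel_mixed_difference_pos[OF \<open>a \<noteq> b\<close> assms(2), of 1 1 x] show False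
      by simp
  qed
  moreover have "finite X" by (simp add: X_def)
  ultimately show ?thesis by blast
qed

end
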